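(* Let $X,Y$ be template graphs with $O(X)=O(Y)$, let $G$ be a cubic graph, $\varphi$ an isomorphism from $c(X)$ onto an induced subgraph $R'$ of $G$ and $\psi$ as in the definition of transformations, and let $H=G[X\to Y]$ be the resulting extension. Suppose $G$ has a 3-decomposition $(T,C,M)$ such that the restriction $T_X$ of $T$ to $X$ is naïvely extendable to $Y$. Then $H$ has a 3-decomposition.
   Context: A 3-decomposition of a graph is a partition of its edge set into the edge sets of a spanning tree, a (possibly empty) 2-regular subgraph, and a (possibly empty) matching. A template graph is a graph $X$ whose vertex set is partitioned into inner vertices $I(X)$ of degree 3 and outer vertices $O(X)$ of degree 1; its core is $c(X)=X-O(X)$. Given template graphs $X,Y$ with $O(X)=O(Y)$, a cubic graph $G$ and an isomorphism $\varphi$ from $c(X)$ onto an induced subgraph $R'$ of $G$, fix $\psi\colon O(X)\to V(G)\setminus V(R')$ such that $vw\mapsto\varphi(v)\psi(w)$ ($vw\in E(X)$, $v\in I(X)$, $w\in O(X)$) is a bijection onto the edges of $G$ between $R'$ and $G-V(R')$; then $G[X\to Y]=(G-V(R'))\cup c(Y)+\{v\psi(w):vw\in E(Y),w\in O(Y)\}$. Via $\varphi,\psi$ each edge of $X$ corresponds to an edge of $G$; the restriction of $T$ to $X$ is the spanning subgraph of $X$ consisting of the edges of $X$ whose corresponding edges lie in $T$. A spanning forest $T_X$ of $X$ is 3-consistent if every component of $T_X$ contains an outer vertex and every component of $X-E(T_X)$ is a single vertex, a single edge, a cycle, or a path joining two outer vertices. For an outer vertex $v$ with incident edge $e$ set $f(v)=\mathtt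 t$ if $e\in E(T_X)$, $f(v)=\mathtt m$ if $e$ alone forms a component of $X-E(T_X)$, and $f(v)=\mathtt c$ otherwise; $T_X$ realises this assignment $f$. $T_X$ is naïvely extendable to $Y$ if some 3-consistent spanning forest $T_Y$ of $Y$ realises the same assignment and any two outer vertices are in the same component of $T_X$ iff they are in the same component of $T_Y$. *)

theory Defs
  imports Main
begin

text \<open>Finite loopless multigraphs with explicit edge identities.\<close>

record ('v, 'e) mgraph =
  verts :: "'v set"
  edges :: "'e set"
  ends  :: "'e \<Rightarrow> 'v set"

definition wf_graph :: "('v, 'e) mgraph \<Rightarrow> bool" where
  "wf_graph G \<longleftrightarrow> finite (verts G) \<and> finite (edges G) \<and>
     (\<forall>e \<in> edges G. ends G e \<subseteq> verts G \<and> card (ends G e) = 2)"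

definition degF :: "('v, 'e) mgraph \<Rightarrow> 'e set \<Rightarrow> 'v \<Rightarrow> nat" where
  "degF G F v = card {e \<in> F. v \<in> ends G e}"

definition deg :: "('v, 'e) mgraph \<Rightarrow> 'v \<Rightarrow> nat" where
  "deg G v = degF G (edges G) v"

definition cubic :: "('v, 'e) mgraph \<Rightarrow> bool" where
  "cubic G \<longleftrightarrow> wf_graph G \<and> (\<forall>v \<in> verts G. deg G v = 3)"

definition conn :: "('v, 'e) mgraph \<Rightarrow> 'e set \<Rightarrow> 'v \<Rightarrow> 'v \<Rightarrow> bool" where
  "conn G F x y \<longleftrightarrow> (\<lambda>a b. \<exists>e \<in> F. ends G e = {a, b})\<^sup>*\<^sup>* x y"

definition touched :: "('v, 'e) mgraph \<Rightarrow> 'e set \<Rightarrow> 'v set" where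
  "touched G S = \<Union> (ends G ` S)"

definition cycle_edges :: "('v, 'e) mgraph \<Rightarrow> 'e set \<Rightarrow> bool" where
  "cycle_edges G S \<longleftrightarrow> S \<noteq> {} \<and> S \<subseteq> edges G \<and>
     (\<forall>v \<in> touched G S. degF G S v = 2) \<and>
     (\<forall>x \<in> touched G S. \<forall>y \<in> touched G S. conn G S x y)"

definition acyclic_edges :: "('v, 'e) mgraph \<Rightarrow> 'e set \<Rightarrow> bool" where
  "acyclic_edges G F \<longleftrightarrow> \<not> (\<exists>S \<subseteq> F. cycle_edges G S)"

definition spanning_tree :: "('v, 'e) mgraph \<Rightarrow> 'e set \<Rightarrow> bool" where
  "spanning_tree G T \<longleftrightarrow> T \<subseteq> edges G \<and> acyclic_edges G T \<and>
     (\<forall>x \<in> verts G. \<forall>y \<in> verts G. conn G T x y)"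

definition two_regular :: "('v, 'e) mgraph \<Rightarrow> 'e set \<Rightarrow> bool" where
  "two_regular G C \<longleftrightarrow> C \<subseteq> edges G \<and> (\<forall>v \<in> verts G. degF G C v = 0 \<or> degF G C v = 2)"

definition matching :: "('v, 'e) mgraph \<Rightarrow> 'e set \<Rightarrow> bool" where
  "matching G M \<longleftrightarrow> M \<subseteq> edges G \<and> (\<forall>v \<in> verts G. degF G M v \<le> 1)"

definition three_decomp :: "('v, 'e) mgraph \<Rightarrow> 'e set \<Rightarrow> 'e set \<Rightarrow> 'e set \<Rightarrow> bool" where
  "three_decomp G T C M \<longleftrightarrow> T \<union> C \<union> M = edges G \<and>
     T \<inter> C = {} \<and> T \<inter> M = {} \<and> C \<inter> M = {} \<and>
     spanning_tree G T \<and> two_regular G C \<and> matching G M"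

text \<open>We also require that no edge joins two outer vertices (implicit in the paper,
  since every edge of X must correspond to an edge of G).\<close>
definition template :: "('w, 'x) mgraph \<Rightarrow> 'w set \<Rightarrow> bool" where
  "template X Out \<longleftrightarrow> wf_graph X \<and> Out \<subseteq> verts X \<and>
     (\<forall>v \<in> verts X - Out. deg X v = 3) \<and> (\<forall>v \<in> Out. deg X v = 1) \<and>
     (\<forall>e \<in> edges X. \<not> ends X e \<subseteq> Out)"

text \<open>f combines phi (on inner vertices) and psi (on outer vertices); chi is the
  induced correspondence of edges of X with the edges of G incident with R' = f ` I(X).
  Core edges are mapped bijectively onto the edges of G inside R' (so R' is induced and
  phi is an isomorphism), edges at outer vertices bijectively onto the edges between R'
  and G - V(R').\<close>
definition embedding :: "('v, 'e) mgraph \<Rightarrow> ('w, 'x) mgraph \<Rightarrow> 'w set \<Rightarrow>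
     ('w \<Rightarrow> 'v) \<Rightarrow> ('x \<Rightarrow> 'e) \<Rightarrow> bool" where
  "embedding G X Out f \<chi> \<longleftrightarrow>
     inj_on f (verts X - Out) \<and> f ` (verts X - Out) \<subseteq> verts G \<and>
     f ` Out \<subseteq> verts G - f ` (verts X - Out) \<and>
     bij_betw \<chi> (edges X) {e \<in> edges G. ends G e \<inter> f ` (verts X - Out) \<noteq> {}} \<and>
     (\<forall>e \<in> edges X. ends G (\<chi> e) = f ` ends X e)"

definition transform :: "('v, 'e) mgraph \<Rightarrow> ('w, 'x) mgraph \<Rightarrow> ('w, 'y) mgraph \<Rightarrow> 'w set \<Rightarrow>
     ('w \<Rightarrow> 'v) \<Rightarrow> ('x \<Rightarrow> 'e) \<Rightarrow> ('v + 'w, 'e + 'y) mgraph" where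
  "transform G X Y Out f \<chi> =
     \<lparr> verts = Inl ` (verts G - f ` (verts X - Out)) \<union> Inr ` (verts Y - Out),
       edges = Inl ` (edges G - \<chi> ` edges X) \<union> Inr ` edges Y,
       ends = (\<lambda>e. case e of
                 Inl e' \<Rightarrow> Inl ` ends G e'
               | Inr e' \<Rightarrow> (\<lambda>w. if w \<in> Out then Inl (f w) else Inr w) ` ends Y e') \<rparr>"

definition restrict_to :: "('w, 'x) mgraph \<Rightarrow> ('x \<Rightarrow> 'e) \<Rightarrow> 'e set \<Rightarrow> 'x set" where
  "restrict_to X \<chi> T = {e \<in> edges X. \<chi> e \<in> T}"

definition comp_verts :: "('v, 'e) mgraph \<Rightarrow> 'e set \<Rightarrow> 'v \<Rightarrow> 'v set" where
  "comp_verts G F v = {u \<in> verts G. conn G F v u}"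

definition comp_edges :: "('v, 'e) mgraph \<Rightarrow> 'e set \<Rightarrow> 'v \<Rightarrow> 'e set" where
  "comp_edges G F v = {e \<in> F. ends G e \<subseteq> comp_verts G F v}"

text \<open>A component (vertex set K, edge set S) is a path joining two outer vertices:
  nonempty, acyclic (it is connected), maximum degree 2, and its ends (the degree-1
  vertices) are outer.\<close>
definition outer_path :: "('v, 'e) mgraph \<Rightarrow> 'v set \<Rightarrow> 'v set \<Rightarrow> 'e set \<Rightarrow> bool" where
  "outer_path G Out K S \<longleftrightarrow> S \<noteq> {} \<and> acyclic_edges G S \<and>
     (\<forall>u \<in> K. degF G S u \<le> 2) \<and> (\<forall>u \<in> K. degF G S u = 1 \<longrightarrow> u \<in> Out)"

definition three_consistent :: "('w, 'x) mgraph \<Rightarrow> 'w set \<Rightarrow> 'x set \<Rightarrow> bool" where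
  "three_consistent X Out TX \<longleftrightarrow>
     TX \<subseteq> edges X \<and> acyclic_edges X TX \<and>
     (\<forall>v \<in> verts X. \<exists>u \<in> Out. conn X TX v u) \<and>
     (\<forall>v \<in> verts X.
        let K = comp_verts X (edges X - TX) v; S = comp_edges X (edges X - TX) v in
        S = {} \<or> card S = 1 \<or> cycle_edges X S \<or> outer_path X Out K S)"

datatype label = LabT | LabM | LabC

definition out_edge :: "('w, 'x) mgraph \<Rightarrow> 'w \<Rightarrow> 'x" where
  "out_edge X v = (THE e. e \<in> edges X \<and> v \<in> ends X e)"

definition label_of :: "('w, 'x) mgraph \<Rightarrow> 'x set \<Rightarrow> 'w \<Rightarrow> label" where
  "label_of X TX v =
     (let e = out_edge X v in
      if e \<in> TX then LabT
      else if comp_edges X (edges X - TX) v = {e} then LabM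
      else LabC)"

definition naively_extendable :: "('w, 'x) mgraph \<Rightarrow> ('w, 'y) mgraph \<Rightarrow> 'w set \<Rightarrow> 'x set \<Rightarrow> bool" where
  "naively_extendable X Y Out TX \<longleftrightarrow> three_consistent X Out TX \<and>
     (\<exists>TY. three_consistent Y Out TY \<and>
        (\<forall>v \<in> Out. label_of Y TY v = label_of X TX v) \<and>
        (\<forall>v \<in> Out. \<forall>w \<in> Out. conn X TX v w \<longleftrightarrow> conn Y TY v w))"

end

(*
  Outside R' the decomposition (T, C, M) of G is kept. Inside, TX is replaced by the forest TY,
  and the edges of Y - TY are split into the single-edge components of Y - TY (matching) and
  the remaining ones (cycles and paths between outer vertices, hence 2-regular at inner
  vertices). As TX and TY give every outer vertex the same label, each dangling edge stays in
  its class, so degrees outside R' do not change. The new tree edge set is connected because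
  TX and TY connect the same outer vertices, and it is acyclic by counting: for a forest
  |V| - |E| is the number of components, and the swap preserves |V| - |T|.
*)

theory Submission
  imports Defs "HOL-Library.Transitive_Closure_Table"
begin

section \<open>Connectivity\<close>

definition adj :: "('v, 'e) mgraph \<Rightarrow> 'e set \<Rightarrow> 'v \<Rightarrow> 'v \<Rightarrow> bool" where
  "adj G F a b \<longleftrightarrow> (\<exists>e \<in> F. ends G e = {a, b})"

lemma conn_iff_adj: "conn G F x y \<longleftrightarrow> (adj G F)\<^sup>*\<^sup>* x y"
  unfolding conn_def adj_def[abs_def] ..

lemma conn_refl [simp]: "conn G F x x"
  unfolding conn_def by simp

lemma conn_trans: "conn G F x y \<Longrightarrow> conn G F y z \<Longrightarrow> conn G F x z"
  unfolding conn_def by (rule rtranclp_trans)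

lemma conn_sym: "conn G F x y \<Longrightarrow> conn G F y x"
proof -
  have "symp (adj G F)"
    by (auto simp: symp_def adj_def insert_commute)
  then show "conn G F x y \<Longrightarrow> conn G F y x"
    unfolding conn_iff_adj by (metis symp_rtranclp sympD)
qed

lemma conn_mono: "conn G F x y \<Longrightarrow> F \<subseteq> F' \<Longrightarrow> conn G F' x y"
  unfolding conn_def by (erule mono_rtranclp[rule_format, rotated]) blast

lemma conn_edge: "e \<in> F \<Longrightarrow> ends G e = {a, b} \<Longrightarrow> conn G F a b"
  unfolding conn_def by (intro r_into_rtranclp) blast

lemma conn_empty: "conn G {} x y \<longleftrightarrow> x = y"
proof
  show "conn G {} x y \<Longrightarrow> x = y"
    unfolding conn_def by (induction rule: rtranclp_induct) auto
qed simp

lemma conn_insert: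
  assumes "ends G e = {a, b}"
  shows "conn G (insert e F) x y \<longleftrightarrow>
    conn G F x y \<or> (conn G F x a \<and> conn G F b y) \<or> (conn G F x b \<and> conn G F a y)"
proof
  assume "conn G (insert e F) x y"
  then show "conn G F x y \<or> (conn G F x a \<and> conn G F b y) \<or> (conn G F x b \<and> conn G F a y)"
    unfolding conn_def[of G "insert e F"]
  proof (induction rule: rtranclp_induct)
    case (step y z)
    then obtain g where g: "g \<in> insert e F" "ends G g = {y, z}" by blast
    show ?case
    proof (cases "g \<in> F")
      case True
      then show ?thesis using step.IH conn_edge[OF True g(2)] conn_trans by metis
    next
      case False
      then have "(y = a \<and> z = b) \<or> (y = b \<and> z = a)"
        using g assms by (auto simp: doubleton_eq_iff)
      then show ?thesis using step.IH conn_trans conn_sym conn_refl by metis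
    qed
  qed simp
next
  have ab: "conn G (insert e F) a b" using conn_edge[OF _ assms] by simp
  have mono: "conn G F p q \<Longrightarrow> conn G (insert e F) p q" for p q
    by (erule conn_mono) blast
  assume "conn G F x y \<or> (conn G F x a \<and> conn G F b y) \<or> (conn G F x b \<and> conn G F a y)"
  then show "conn G (insert e F) x y"
    using ab mono conn_trans conn_sym by metis
qed

lemma conn_incident_edge: "conn G F a b \<Longrightarrow> a \<noteq> b \<Longrightarrow> \<exists>e \<in> F. a \<in> ends G e"
  unfolding conn_def by (induction rule: converse_rtranclp_induct) auto

lemma doubleton_if_card_2:
  assumes "card A = 2" "p \<in> A" "q \<in> A" "p \<noteq> q"
  shows "A = {p, q}"
proof -
  obtain a b where "A = {a, b}" "a \<noteq> b" using assms(1) card_2_iff by metis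
  then show ?thesis using assms by auto
qed

lemma wf_graph_ends:
  assumes "wf_graph G" "e \<in> edges G"
  shows "card (ends G e) = 2" "ends G e \<subseteq> verts G"
  using assms unfolding wf_graph_def by auto

lemma wf_graph_finite: "wf_graph G \<Longrightarrow> finite (verts G)" "wf_graph G \<Longrightarrow> finite (edges G)"
  unfolding wf_graph_def by simp_all

lemma wf_graph_edgeE:
  assumes "wf_graph G" "e \<in> edges G"
  obtains a b where "ends G e = {a, b}" "a \<noteq> b" "a \<in> verts G" "b \<in> verts G"
  using wf_graph_ends[OF assms] card_2_iff by (metis insert_subset)

lemma conn_ends:
  assumes "e \<in> F" "card (ends G e) = 2" "p \<in> ends G e" "q \<in> ends G e"
  shows "conn G F p q"
proof (cases "p = q")
  case False
  then show ?thesis using assms doubleton_if_card_2 conn_edge by metis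
qed simp

lemma comp_verts_eq:
  assumes "conn G F v v'"
  shows "comp_verts G F v = comp_verts G F v'"
  unfolding comp_verts_def using assms conn_sym conn_trans by metis

lemma comp_edges_eq:
  assumes "conn G F v v'"
  shows "comp_edges G F v = comp_edges G F v'"
  unfolding comp_edges_def using comp_verts_eq[OF assms] by simp

lemma comp_verts_self: "v \<in> verts G \<Longrightarrow> v \<in> comp_verts G F v"
  unfolding comp_verts_def by simp

lemma comp_verts_eq_iff:
  assumes "w' \<in> verts G"
  shows "comp_verts G F w = comp_verts G F w' \<longleftrightarrow> conn G F w w'"
proof
  assume "comp_verts G F w = comp_verts G F w'"
  then show "conn G F w w'"
    using comp_verts_self[OF assms, of F] unfolding comp_verts_def by blast
qed (rule comp_verts_eq)

lemma comp_edges_subset: "comp_edges G F v \<subseteq> F"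
  unfolding comp_edges_def by blast

lemma edge_in_comp_edges:
  assumes "wf_graph G" "F \<subseteq> edges G" "e \<in> F" "v \<in> ends G e"
  shows "e \<in> comp_edges G F v"
proof -
  have "e \<in> edges G" using assms(2,3) by blast
  then have "ends G e \<subseteq> comp_verts G F v"
    unfolding comp_verts_def
    using conn_ends[OF assms(3) _ assms(4)] wf_graph_ends[OF assms(1)] by blast
  then show ?thesis unfolding comp_edges_def using assms(3) by simp
qed

lemma comp_edges_eq_ends:
  assumes "wf_graph G" "F \<subseteq> edges G" "e \<in> F" "v \<in> ends G e" "v' \<in> ends G e"
  shows "comp_edges G F v = comp_edges G F v'"
  using assms by (intro comp_edges_eq conn_ends[OF assms(3)] wf_graph_ends(1)) auto

lemma degF_insert:
  "finite F \<Longrightarrow> g \<notin> F \<Longrightarrow> degF G (insert g F) v = degF G F v + (if v \<in> ends G g then 1 else 0)"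
proof -
  assume "finite F" "g \<notin> F"
  moreover have "{e \<in> insert g F. v \<in> ends G e} =
      (if v \<in> ends G g then insert g {e \<in> F. v \<in> ends G e} else {e \<in> F. v \<in> ends G e})"
    by auto
  ultimately show ?thesis unfolding degF_def by simp
qed

lemma degF_untouched: "v \<notin> touched G P \<Longrightarrow> degF G P v = 0"
  unfolding degF_def touched_def by (metis (no_types, lifting) UN_I card.empty empty_Collect_eq)

section \<open>Paths and cycles\<close>

lemma touched_insert [simp]: "touched G (insert g P) = ends G g \<union> touched G P"
  unfolding touched_def by simp

definition path_edges :: "('v, 'e) mgraph \<Rightarrow> 'e set \<Rightarrow> 'v \<Rightarrow> 'v \<Rightarrow> bool" where
  "path_edges G P x y \<longleftrightarrow> finite P \<and> x \<noteq> y \<and> x \<in> touched G P \<and> y \<in> touched G P \<and>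
     degF G P x = 1 \<and> degF G P y = 1 \<and> (\<forall>v \<in> touched G P - {x, y}. degF G P v = 2) \<and>
     (\<forall>v \<in> touched G P. conn G P x v)"

lemma path_edges_single:
  assumes "ends G g = {x, y}" "x \<noteq> y"
  shows "path_edges G {g} x y"
proof -
  have "degF G {g} v = 1" if "v \<in> {x, y}" for v
    using that assms(1) unfolding degF_def by (simp add: Collect_conv_if)
  moreover have "conn G {g} x y" using conn_edge[OF _ assms(1)] by simp
  ultimately show ?thesis
    using assms unfolding path_edges_def touched_def by auto
qed

lemma path_edges_extend:
  assumes P: "path_edges G P y z" and g: "ends G g = {x, y}" and x: "x \<notin> touched G P"
  shows "path_edges G (insert g P) x z"
proof -
  have fin: "finite P" and yz: "y \<noteq> z" "y \<in> touched G P" "z \<in> touched G P"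
    using P unfolding path_edges_def by auto
  have "g \<notin> P" using x g unfolding touched_def by auto
  then have deg: "degF G (insert g P) v = degF G P v + (if v \<in> {x, y} then 1 else 0)" for v
    using degF_insert[OF fin \<open>g \<notin> P\<close>, of G v] g by simp
  have "x \<noteq> y" "x \<noteq> z" using x yz by auto
  have xy: "conn G (insert g P) x y" using conn_edge[OF _ g] by simp
  have yv: "conn G (insert g P) y v" if "v \<in> touched G P" for v
  proof -
    have "conn G P y v" using P that unfolding path_edges_def by blast
    then show ?thesis by (rule conn_mono) blast
  qed
  have "conn G (insert g P) x v" if "v \<in> touched G (insert g P)" for v
  proof -
    have "v \<in> {x, y} \<or> v \<in> touched G P" using that g by auto
    then show ?thesis
    proof
      assume "v \<in> {x, y}"
      then show ?thesis using xy by auto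
    next
      assume "v \<in> touched G P"
      then show ?thesis using conn_trans[OF xy yv] by blast
    qed
  qed
  then show ?thesis
    using P deg degF_untouched[OF x] \<open>x \<noteq> y\<close> \<open>x \<noteq> z\<close> yz g
    unfolding path_edges_def by auto
qed

lemma path_edges_of_rtrancl_path:
  assumes "rtrancl_path (adj G F) x xs y" "distinct (x # xs)" "x \<noteq> y"
  shows "\<exists>P \<subseteq> F. touched G P \<subseteq> set (x # xs) \<and> path_edges G P x y"
  using assms
proof (induction rule: rtrancl_path.induct)
  case (step x y' ys z)
  obtain g where g: "g \<in> F" "ends G g = {x, y'}" using step.hyps(1) unfolding adj_def by blast
  have "x \<noteq> y'" "x \<notin> set ys" "distinct (y' # ys)" using step.prems by auto
  show ?case
  proof (cases "y' = z")
    case True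
    then show ?thesis
      using path_edges_single[OF g(2) \<open>x \<noteq> y'\<close>] g unfolding touched_def by auto
  next
    case False
    then obtain P where P: "P \<subseteq> F" "touched G P \<subseteq> set (y' # ys)" "path_edges G P y' z"
      using step.IH[OF \<open>distinct (y' # ys)\<close> False] by blast
    moreover have "x \<notin> touched G P" using P(2) step.prems by auto
    ultimately have "path_edges G (insert g P) x z"
      using path_edges_extend[OF P(3) g(2)] by blast
    then show ?thesis using P g by (intro exI[of _ "insert g P"]) auto
  qed
qed simp

lemma cycle_edges_insert_path:
  assumes P: "path_edges G P a b" and e: "ends G e = {a, b}" "e \<notin> P"
    and sub: "insert e P \<subseteq> edges G"
  shows "cycle_edges G (insert e P)"
proof -
  have fin: "finite P" and ab: "a \<in> touched G P" "b \<in> touched G P"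
    using P unfolding path_edges_def by auto
  then have touched: "touched G (insert e P) = touched G P" using e by auto
  have "degF G (insert e P) v = degF G P v + (if v \<in> {a, b} then 1 else 0)" for v
    using degF_insert[OF fin e(2), of G v] e(1) by simp
  then have "degF G (insert e P) v = 2" if "v \<in> touched G P" for v
    using P that unfolding path_edges_def by (cases "v \<in> {a, b}") auto
  moreover have "conn G (insert e P) a v" if "v \<in> touched G P" for v
  proof -
    have "conn G P a v" using P that unfolding path_edges_def by blast
    then show ?thesis by (rule conn_mono) blast
  qed
  then have "conn G (insert e P) v w" if "v \<in> touched G P" "w \<in> touched G P" for v w
    using that by (meson conn_sym conn_trans)
  ultimately show ?thesis
    using sub unfolding cycle_edges_def touched by auto
qed

lemma not_acyclic_if_conn_minus_edge:
  assumes "F \<subseteq> edges G" "e \<in> F" "ends G e = {a, b}" "a \<noteq> b" "conn G (F - {e}) a b"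
  shows "\<not> acyclic_edges G F"
proof -
  have "(adj G (F - {e}))\<^sup>*\<^sup>* a b" using assms(5) unfolding conn_iff_adj .
  then obtain xs where "rtrancl_path (adj G (F - {e})) a xs b"
    unfolding rtranclp_eq_rtrancl_path by blast
  then obtain xs' where xs': "rtrancl_path (adj G (F - {e})) a xs' b" "distinct (a # xs')"
    by (rule rtrancl_path_distinct)
  obtain P where P: "P \<subseteq> F - {e}" "path_edges G P a b"
    using path_edges_of_rtrancl_path[OF xs' assms(4)] by blast
  have sub: "insert e P \<subseteq> F" using P(1) assms(2) by blast
  have "cycle_edges G (insert e P)"
  proof (rule cycle_edges_insert_path[OF P(2) assms(3)])
    show "e \<notin> P" using P(1) by blast
    show "insert e P \<subseteq> edges G" using sub assms(1) by blast
  qed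
  moreover note sub
  ultimately show ?thesis unfolding acyclic_edges_def by blast
qed

lemma sum_degF_eq_sum_card_ends:
  assumes "finite K" "finite E"
  shows "(\<Sum>v\<in>K. degF G E v) = (\<Sum>g\<in>E. card (ends G g \<inter> K))"
proof -
  have "(\<Sum>v\<in>K. degF G E v) = (\<Sum>v\<in>K. \<Sum>g\<in>E. if v \<in> ends G g then 1 else 0)"
    using assms by (simp add: degF_def sum.inter_filter[symmetric])
  also have "\<dots> = (\<Sum>g\<in>E. \<Sum>v\<in>K. if v \<in> ends G g then 1 else 0)" by (rule sum.swap)
  also have "\<dots> = (\<Sum>g\<in>E. card (ends G g \<inter> K))"
  proof (rule sum.cong[OF refl])
    fix g
    have "ends G g \<inter> K = {v \<in> K. v \<in> ends G g}" by blast
    then show "(\<Sum>v\<in>K. if v \<in> ends G g then 1 else 0) = card (ends G g \<inter> K)"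
      using assms(1) by (simp add: sum.inter_filter[symmetric])
  qed
  finally show ?thesis .
qed

lemma even_sum_degF_closed:
  assumes "finite K" "finite E" "\<forall>g \<in> E. card (ends G g) = 2"
    and closed: "\<forall>g \<in> E. ends G g \<inter> K \<noteq> {} \<longrightarrow> ends G g \<subseteq> K"
  shows "even (\<Sum>v\<in>K. degF G E v)"
proof -
  have "even (card (ends G g \<inter> K))" if "g \<in> E" for g
    using that assms(3) closed by (cases "ends G g \<inter> K = {}") (auto simp: Int_absorb2)
  then show ?thesis unfolding sum_degF_eq_sum_card_ends[OF assms(1,2)] by (simp add: dvd_sum)
qed

text \<open>Otherwise the component K of a in S - e would have degree sum 2|K| - 1, which is odd.\<close>
lemma cycle_edges_conn_minus_edge:
  assumes wf: "wf_graph G" and cyc: "cycle_edges G S" and e: "e \<in> S" "ends G e = {a, b}"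
  shows "conn G (S - {e}) a b"
proof (rule ccontr)
  assume nab: "\<not> conn G (S - {e}) a b"
  define E where "E = S - {e}"
  define K where "K = {v \<in> touched G S. conn G E a v}"
  have S: "S \<subseteq> edges G" using cyc unfolding cycle_edges_def by blast
  then have "finite S" using wf unfolding wf_graph_def by (meson finite_subset)
  moreover have "K \<subseteq> verts G"
    using S wf unfolding K_def touched_def wf_graph_def by blast
  ultimately have fin: "finite E" "finite K"
    using wf finite_subset unfolding E_def wf_graph_def by auto
  have "a \<in> K" "b \<notin> K" unfolding K_def touched_def using e nab E_def by auto
  have deg: "degF G E v + (if v = a then 1 else 0) = 2" if "v \<in> K" for v
  proof -
    have "degF G S v = 2" using that cyc unfolding cycle_edges_def K_def by blast
    moreover have "S = insert e E" "e \<notin> E" using e unfolding E_def by auto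
    moreover have "v \<in> ends G e \<longleftrightarrow> v = a" using that \<open>b \<notin> K\<close> e(2) by auto
    ultimately show ?thesis using degF_insert[OF fin(1), of e G v] by simp
  qed
  have "(\<Sum>v\<in>K. degF G E v + (if v = a then 1 else 0)) = (\<Sum>v\<in>K. 2)"
    using deg by (rule sum.cong[OF refl])
  then have "(\<Sum>v\<in>K. degF G E v) + 1 = 2 * card K"
    using fin(2) \<open>a \<in> K\<close> by (simp add: sum.distrib)
  moreover have "even (\<Sum>v\<in>K. degF G E v)"
  proof (rule even_sum_degF_closed[OF fin(2,1)])
    show "\<forall>g \<in> E. card (ends G g) = 2" using S wf unfolding E_def wf_graph_def by blast
    show "\<forall>g \<in> E. ends G g \<inter> K \<noteq> {} \<longrightarrow> ends G g \<subseteq> K"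
    proof (intro ballI impI subsetI)
      fix g q assume g: "g \<in> E" "ends G g \<inter> K \<noteq> {}" and q: "q \<in> ends G g"
      then obtain p where p: "p \<in> ends G g" "p \<in> K" by blast
      have "card (ends G g) = 2" using g S wf unfolding E_def wf_graph_def by blast
      then have "conn G E p q" using conn_ends[OF g(1) _ p(1) q] by simp
      moreover have "conn G E a p" using p(2) by (simp add: K_def)
      ultimately have "conn G E a q" by (rule conn_trans[rotated])
      moreover have "q \<in> touched G S" using g q unfolding E_def touched_def by blast
      ultimately show "q \<in> K" unfolding K_def by blast
    qed
  qed
  ultimately show False by (metis dvd_triv_left even_add odd_one)
qed

section \<open>Counting the components of a forest\<close>

definition ncomp :: "('v, 'e) mgraph \<Rightarrow> 'e set \<Rightarrow> nat" where
  "ncomp G F = card (comp_verts G F ` verts G)"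

lemma ncomp_empty: "finite (verts G) \<Longrightarrow> ncomp G {} = card (verts G)"
proof -
  assume "finite (verts G)"
  moreover have "comp_verts G {} ` verts G = (\<lambda>v. {v}) ` verts G"
    unfolding comp_verts_def conn_empty by auto
  ultimately show ?thesis unfolding ncomp_def by (simp add: card_image)
qed

lemma comp_verts_insert_conn:
  assumes e: "ends G e = {a, b}" and ab: "conn G F a b"
  shows "comp_verts G (insert e F) = comp_verts G F"
proof -
  have "conn G (insert e F) x y \<longleftrightarrow> conn G F x y" for x y
    unfolding conn_insert[OF e] using ab conn_trans conn_sym by metis
  then show ?thesis unfolding comp_verts_def by simp
qed

lemma comp_verts_insert_not_conn:
  assumes e: "ends G e = {a, b}" and nab: "\<not> conn G F a b" and v: "v \<in> verts G"
  defines "K \<equiv> comp_verts G F a \<union> comp_verts G F b"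
  shows "comp_verts G (insert e F) v = (if v \<in> K then K else comp_verts G F v)"
proof (cases "v \<in> K")
  case True
  then have "conn G F a v \<or> conn G F b v" unfolding K_def comp_verts_def by blast
  then have "conn G (insert e F) a v"
  proof
    assume "conn G F a v"
    then show ?thesis by (rule conn_mono) blast
  next
    assume "conn G F b v"
    then show ?thesis using conn_insert[OF e, of F a v] by simp
  qed
  then have "comp_verts G (insert e F) v = comp_verts G (insert e F) a"
    using comp_verts_eq by metis
  also have "\<dots> = K"
    unfolding K_def comp_verts_def conn_insert[OF e] using nab by auto
  finally show ?thesis using True by simp
next
  case False
  then have "\<not> conn G F a v" "\<not> conn G F b v"
    using v unfolding K_def comp_verts_def by auto
  then have "\<not> conn G F v a" "\<not> conn G F v b" by (meson conn_sym)+
  then have "conn G (insert e F) v u \<longleftrightarrow> conn G F v u" for u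
    unfolding conn_insert[OF e] by simp
  then show ?thesis using False unfolding comp_verts_def by simp
qed

lemma ncomp_insert_not_conn:
  assumes e: "ends G e = {a, b}" and nab: "\<not> conn G F a b"
    and ab: "a \<in> verts G" "b \<in> verts G" and fin: "finite (verts G)"
  shows "ncomp G (insert e F) + 1 = ncomp G F"
proof -
  define c where "c = comp_verts G F"
  define K where "K = c a \<union> c b"
  have comp_insert: "comp_verts G (insert e F) v = (if v \<in> K then K else c v)" if "v \<in> verts G" for v
    using comp_verts_insert_not_conn[OF e nab that] unfolding K_def c_def .
  have aK: "a \<in> K" using comp_verts_self[OF ab(1)] unfolding K_def c_def by blast
  have "c a \<noteq> c b" using comp_verts_eq_iff[OF ab(2)] nab unfolding c_def by blast
  moreover have "c a \<in> c ` verts G" "c b \<in> c ` verts G" using ab by auto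
  moreover have "K \<notin> c ` verts G - {c a, c b}"
  proof
    assume "K \<in> c ` verts G - {c a, c b}"
    then obtain v where v: "K = c v" "c v \<noteq> c a" by auto
    have "a \<in> c v" using aK unfolding v(1) .
    then have "conn G F v a" unfolding c_def comp_verts_def by blast
    then have "c v = c a" unfolding c_def by (rule comp_verts_eq)
    then show False using v(2) by contradiction
  qed
  moreover have "comp_verts G (insert e F) ` verts G = insert K (c ` verts G - {c a, c b})"
  proof -
    have "v \<in> K \<longleftrightarrow> c v = c a \<or> c v = c b" if "v \<in> verts G" for v
    proof -
      have "v \<in> K \<longleftrightarrow> conn G F a v \<or> conn G F b v"
        using that unfolding K_def c_def comp_verts_def by simp
      also have "\<dots> \<longleftrightarrow> c v = c a \<or> c v = c b"
        unfolding c_def comp_verts_eq_iff[OF ab(1)] comp_verts_eq_iff[OF ab(2)] by (meson conn_sym)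
      finally show ?thesis .
    qed
    then show ?thesis using aK comp_insert ab by (auto simp: image_iff)
  qed
  ultimately show ?thesis
    unfolding ncomp_def c_def[symmetric]
    using fin card_mono[of "c ` verts G" "{c a, c b}"] by (simp add: card_Diff_subset)
qed

lemma card_verts_le_ncomp_add_card:
  assumes wf: "wf_graph G" and "finite F" "F \<subseteq> edges G"
  shows "card (verts G) \<le> ncomp G F + card F"
  using assms(2,3)
proof (induction rule: finite_induct)
  case empty
  then show ?case using ncomp_empty[OF wf_graph_finite(1)[OF wf]] by simp
next
  case (insert e F)
  obtain a b where ab: "ends G e = {a, b}" "a \<in> verts G" "b \<in> verts G"
    using wf_graph_edgeE[OF wf] insert.prems by (metis insert_subset)
  show ?case
  proof (cases "conn G F a b")
    case True
    then show ?thesis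
      using insert comp_verts_insert_conn[OF ab(1)] unfolding ncomp_def by simp
  next
    case False
    then show ?thesis
      using insert ncomp_insert_not_conn[OF ab(1) False ab(2,3)] wf unfolding wf_graph_def by simp
  qed
qed

lemma acyclic_edges_subset: "acyclic_edges G F \<Longrightarrow> F' \<subseteq> F \<Longrightarrow> acyclic_edges G F'"
  unfolding acyclic_edges_def by blast

lemma ncomp_add_card_if_acyclic:
  assumes wf: "wf_graph G" and sub: "F \<subseteq> edges G" and acyclic: "acyclic_edges G F"
  shows "ncomp G F + card F = card (verts G)"
proof -
  have "finite F" using sub wf unfolding wf_graph_def by (meson finite_subset)
  then show ?thesis using sub acyclic
  proof (induction rule: finite_induct)
    case empty
    then show ?case using ncomp_empty[OF wf_graph_finite(1)[OF wf]] by simp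
  next
    case (insert e F)
    obtain a b where ab: "ends G e = {a, b}" "a \<noteq> b" "a \<in> verts G" "b \<in> verts G"
      using wf_graph_edgeE[OF wf] insert.prems(1) by (metis insert_subset)
    have "\<not> conn G F a b"
      using not_acyclic_if_conn_minus_edge[OF insert.prems(1) _ ab(1,2)] insert.prems(2) insert.hyps(2)
      by auto
    then have "ncomp G (insert e F) + 1 = ncomp G F"
      using ncomp_insert_not_conn[OF ab(1) _ ab(3,4)] wf unfolding wf_graph_def by simp
    moreover have "ncomp G F + card F = card (verts G)"
      using insert.IH insert.prems acyclic_edges_subset by blast
    ultimately show ?case using insert.hyps by simp
  qed
qed

lemma acyclic_if_ncomp_add_card:
  assumes wf: "wf_graph G" and sub: "F \<subseteq> edges G" and count: "ncomp G F + card F = card (verts G)"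
  shows "acyclic_edges G F"
proof (rule ccontr)
  assume "\<not> acyclic_edges G F"
  then obtain S where S: "S \<subseteq> F" "cycle_edges G S" unfolding acyclic_edges_def by blast
  then obtain e where e: "e \<in> S" unfolding cycle_edges_def by blast
  then have "e \<in> edges G" using S(1) sub by blast
  then obtain a b where ab: "ends G e = {a, b}" by (rule wf_graph_edgeE[OF wf])
  have "conn G (S - {e}) a b" by (rule cycle_edges_conn_minus_edge[OF wf S(2) e ab])
  then have "conn G (F - {e}) a b" by (rule conn_mono) (use S(1) in blast)
  moreover have "e \<in> F" using S e by blast
  ultimately have "ncomp G F = ncomp G (F - {e})"
    using comp_verts_insert_conn[OF ab] unfolding ncomp_def by (metis insert_Diff)
  moreover have "finite F" using sub wf unfolding wf_graph_def by (meson finite_subset)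
  then have "card (verts G) \<le> ncomp G (F - {e}) + card (F - {e})"
    using card_verts_le_ncomp_add_card[OF wf] sub by auto
  moreover have "card F = card (F - {e}) + 1"
    using card_Suc_Diff1[OF \<open>finite F\<close> \<open>e \<in> F\<close>] by simp
  ultimately show False using count by simp
qed

lemma ncomp_if_connected:
  assumes "\<forall>x \<in> verts G. \<forall>y \<in> verts G. conn G F x y"
  shows "ncomp G F = (if verts G = {} then 0 else 1)"
proof (cases "verts G = {}")
  case False
  then have "comp_verts G F ` verts G = {verts G}"
    using assms unfolding comp_verts_def by auto
  then show ?thesis unfolding ncomp_def using False by simp
qed (simp add: ncomp_def)

lemma card_image_eq_if_same_kernel:
  assumes "\<forall>x \<in> A. \<forall>y \<in> A. g x = g y \<longleftrightarrow> h x = h y"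
  shows "card (g ` A) = card (h ` A)"
proof -
  define \<phi> where "\<phi> z = h (inv_into A g z)" for z
  have \<phi>: "\<phi> (g a) = h a" if "a \<in> A" for a
    using that assms inv_into_into[of "g a" g A] f_inv_into_f[of "g a" g A]
    unfolding \<phi>_def by auto
  then have "\<phi> ` g ` A = h ` A" by (auto simp: image_image)
  moreover have "inj_on \<phi> (g ` A)"
    using assms \<phi> by (auto simp: inj_on_def)
  ultimately show ?thesis by (metis card_image)
qed

lemma ncomp_eq_card_comp_verts_image:
  assumes "Out \<subseteq> verts G" and "\<forall>v \<in> verts G. \<exists>u \<in> Out. conn G F v u"
  shows "ncomp G F = card (comp_verts G F ` Out)"
proof -
  have "comp_verts G F ` verts G = comp_verts G F ` Out"
  proof
    show "comp_verts G F ` verts G \<subseteq> comp_verts G F ` Out"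
      using assms(2) comp_verts_eq by (fastforce simp: image_iff)
  qed (use assms(1) in blast)
  then show ?thesis unfolding ncomp_def by simp
qed

section \<open>Template graphs\<close>

lemma template_wf_graph: "template Z Out \<Longrightarrow> wf_graph Z"
  unfolding template_def by simp

lemma template_outer_subset: "template Z Out \<Longrightarrow> Out \<subseteq> verts Z"
  unfolding template_def by simp

lemma template_edge_outer_unique:
  assumes tpl: "template Z Out" and e: "e \<in> edges Z"
    and "p \<in> ends Z e" "p \<in> Out" "q \<in> ends Z e" "q \<in> Out"
  shows "p = q"
proof (rule ccontr)
  assume "p \<noteq> q"
  then have "ends Z e = {p, q}"
    using assms doubleton_if_card_2 wf_graph_ends(1)[OF template_wf_graph[OF tpl] e] by metis
  then show False using tpl e assms unfolding template_def by auto
qed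

lemma out_edge_iff:
  assumes tpl: "template Z Out" and w: "w \<in> Out"
  shows "e \<in> edges Z \<and> w \<in> ends Z e \<longleftrightarrow> e = out_edge Z w"
proof -
  have "card {e \<in> edges Z. w \<in> ends Z e} = 1"
    using tpl w unfolding template_def deg_def degF_def by blast
  then obtain e0 where e0: "{e \<in> edges Z. w \<in> ends Z e} = {e0}" using card_1_singletonE by blast
  then have "out_edge Z w = e0" unfolding out_edge_def by (rule_tac the_equality) blast+
  then show ?thesis using e0 by blast
qed

lemma out_edge_in_edges: "template Z Out \<Longrightarrow> w \<in> Out \<Longrightarrow> out_edge Z w \<in> edges Z"
  using out_edge_iff by metis

lemma out_edge_incident: "template Z Out \<Longrightarrow> w \<in> Out \<Longrightarrow> w \<in> ends Z (out_edge Z w)"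
  using out_edge_iff by metis

lemma out_edge_inj_on: "template Z Out \<Longrightarrow> inj_on (out_edge Z) Out"
  using out_edge_in_edges out_edge_incident template_edge_outer_unique
  unfolding inj_on_def by metis

lemma out_edge_endsE:
  assumes tpl: "template Z Out" and w: "w \<in> Out"
  obtains u where "ends Z (out_edge Z w) = {w, u}" "u \<in> verts Z - Out"
proof -
  obtain a b where ab: "ends Z (out_edge Z w) = {a, b}" "a \<noteq> b" "a \<in> verts Z" "b \<in> verts Z"
    using wf_graph_edgeE[OF template_wf_graph[OF tpl] out_edge_in_edges[OF tpl w]] by metis
  then obtain u where u: "ends Z (out_edge Z w) = {w, u}" "u \<in> verts Z" "u \<noteq> w"
    using out_edge_incident[OF tpl w] by (auto simp: insert_commute)
  then have "u \<notin> Out"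
    using template_edge_outer_unique[OF tpl out_edge_in_edges[OF tpl w]] w by blast
  then show ?thesis using that u by blast
qed

lemma conn_from_outer:
  assumes tpl: "template Z Out" and w: "w \<in> Out" and u: "ends Z (out_edge Z w) = {w, u}"
    and F: "F \<subseteq> edges Z" and c: "conn Z F w z"
  shows "z \<in> {w, u} \<or> (\<exists>g \<in> F - {out_edge Z w}. u \<in> ends Z g)"
  using c unfolding conn_def
proof (induction rule: rtranclp_induct)
  case (step y z)
  then obtain g where g: "g \<in> F" "ends Z g = {y, z}" by blast
  have "g = out_edge Z w" if "y = w"
    using that g F out_edge_iff[OF tpl w] by blast
  then show ?case using step.IH g u by auto
qed simp

lemma comp_edges_at_outer:
  assumes tpl: "template Z Out" and w: "w \<in> Out" and u: "ends Z (out_edge Z w) = {w, u}"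
    and F: "F \<subseteq> edges Z" and e: "e \<in> comp_edges Z F w" "e \<noteq> out_edge Z w"
  shows "\<exists>g \<in> F - {out_edge Z w}. u \<in> ends Z g"
proof -
  have eF: "e \<in> F" using e(1) comp_edges_subset[of Z F w] by blast
  show ?thesis
  proof (cases "u \<in> ends Z e")
    case True
    then show ?thesis using eF e(2) by blast
  next
    case False
    have eZ: "e \<in> edges Z" using eF F by blast
    then obtain a b where ab: "ends Z e = {a, b}"
      by (rule wf_graph_edgeE[OF template_wf_graph[OF tpl]])
    have "w \<notin> ends Z e" using out_edge_iff[OF tpl w, of e] eZ e(2) by blast
    then have "a \<notin> {w, u}" using False ab by auto
    moreover have "conn Z F w a" using e(1) ab unfolding comp_edges_def comp_verts_def by auto
    ultimately show ?thesis using conn_from_outer[OF tpl w u F] by blast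
  qed
qed

section \<open>3-decompositions of cubic graphs\<close>

lemma three_decompD:
  assumes "three_decomp G T C M"
  shows "T \<union> C \<union> M = edges G" "T \<inter> C = {}" "T \<inter> M = {}" "C \<inter> M = {}"
    "spanning_tree G T" "two_regular G C" "matching G M"
  using assms unfolding three_decomp_def by auto

lemma two_regular_partner_edge:
  assumes wf: "wf_graph G" and C: "two_regular G C" and g: "g \<in> C" "x \<in> ends G g"
  shows "\<exists>g' \<in> C. g' \<noteq> g \<and> x \<in> ends G g'"
proof (rule ccontr)
  assume "\<not> ?thesis"
  then have "{e \<in> C. x \<in> ends G e} = {g}" using g by blast
  moreover have "x \<in> verts G"
    using g C wf_graph_ends(2)[OF wf] unfolding two_regular_def by blast
  ultimately show False using C unfolding two_regular_def degF_def by force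
qed

lemma three_decomp_tree_edge_at:
  assumes "three_decomp G T C M" "wf_graph G" "g \<in> edges G" "x \<in> ends G g"
  shows "\<exists>t \<in> T. x \<in> ends G t"
proof -
  obtain a b where ab: "ends G g = {a, b}" "a \<noteq> b" "a \<in> verts G" "b \<in> verts G"
    by (rule wf_graph_edgeE[OF assms(2,3)])
  then obtain y where "y \<in> verts G" "y \<noteq> x" "x \<in> verts G" using assms(4) by auto
  then show ?thesis
    using three_decompD(5)[OF assms(1)] conn_incident_edge unfolding spanning_tree_def by metis
qed

lemma three_decomp_matching_edge_unique:
  assumes cubic: "cubic G" and dec: "three_decomp G T C M"
    and g: "g \<in> M" "x \<in> ends G g" and g': "g' \<in> edges G - T" "x \<in> ends G g'"
  shows "g' = g"
proof -
  note parts = three_decompD[OF dec]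
  have wf: "wf_graph G" using cubic unfolding cubic_def by simp
  have gE: "g \<in> edges G" using g(1) parts(1) by blast
  have x: "x \<in> verts G" using wf_graph_ends(2)[OF wf gE] g(2) by blast
  have finE: "finite (edges G)" by (rule wf_graph_finite(2)[OF wf])
  have "g' \<in> C \<or> g' \<in> M" using g' parts(1) by blast
  then show ?thesis
  proof
    assume "g' \<in> M"
    then have "{g, g'} \<subseteq> {e \<in> M. x \<in> ends G e}" using g g' by blast
    moreover have "finite {e \<in> M. x \<in> ends G e}"
      using finE parts(1) by (auto intro: finite_subset)
    ultimately have "card {g, g'} \<le> degF G M x"
      unfolding degF_def by (rule card_mono[rotated])
    then show ?thesis using parts(7) x unfolding matching_def by (cases "g = g'") auto
  next
    assume g'C: "g' \<in> C"
    obtain g'' where g'': "g'' \<in> C" "g'' \<noteq> g'" "x \<in> ends G g''"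
      using two_regular_partner_edge[OF wf parts(6) g'C g'(2)] by blast
    obtain t where t: "t \<in> T" "x \<in> ends G t"
      using three_decomp_tree_edge_at[OF dec wf gE g(2)] by blast
    have "g \<notin> C" "g \<notin> T" "t \<notin> C" using g(1) t(1) parts(2-4) by blast+
    then have "g \<noteq> g'" "g \<noteq> g''" "g \<noteq> t" "g' \<noteq> t" "g'' \<noteq> t"
      using g'C g'' g' t by auto
    then have "card {g, g', g'', t} = 4" using g''(2) by simp
    moreover have "{g, g', g'', t} \<subseteq> {e \<in> edges G. x \<in> ends G e}"
      using g g' g'' t parts(1) by auto
    then have "card {g, g', g'', t} \<le> deg G x"
      unfolding deg_def degF_def by (rule card_mono[rotated]) (simp add: finE)
    ultimately have "4 \<le> deg G x" by simp
    then show ?thesis using cubic x unfolding cubic_def by simp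
  qed
qed

section \<open>The transformed graph\<close>

locale naive_extension =
  fixes X :: "('w, 'x) mgraph" and Y :: "('w, 'y) mgraph" and Out :: "'w set"
    and G :: "('v, 'e) mgraph" and f :: "'w \<Rightarrow> 'v" and \<chi> :: "'x \<Rightarrow> 'e"
    and T C M :: "'e set" and TY :: "'y set"
  assumes template_X: "template X Out" and template_Y: "template Y Out"
    and cubic_G: "cubic G"
    and embedding: "embedding G X Out f \<chi>"
    and decomp: "three_decomp G T C M"
    and consistent_X: "three_consistent X Out (restrict_to X \<chi> T)"
    and consistent_Y: "three_consistent Y Out TY"
    and same_labels: "\<forall>v \<in> Out. label_of Y TY v = label_of X (restrict_to X \<chi> T) v"
    and same_conn: "\<forall>v \<in> Out. \<forall>w \<in> Out. conn X (restrict_to X \<chi> T) v w \<longleftrightarrow> conn Y TY v w"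
begin

definition inX :: "'w set" where "inX = verts X - Out"
definition inY :: "'w set" where "inY = verts Y - Out"
definition R :: "'v set" where "R = f ` inX"
definition ER :: "'e set" where "ER = \<chi> ` edges X"
definition TX :: "'x set" where "TX = restrict_to X \<chi> T"
definition RX :: "'x set" where "RX = edges X - TX"
definition RY :: "'y set" where "RY = edges Y - TY"
definition H :: "('v + 'w, 'e + 'y) mgraph" where "H = transform G X Y Out f \<chi>"
definition vmap :: "'w \<Rightarrow> 'v + 'w" where "vmap w = (if w \<in> Out then Inl (f w) else Inr w)"

text \<open>The single-edge components of Y - TY form the matching part inside Y, all other
  components (cycles and paths between outer vertices) the 2-regular part.\<close>
definition CY :: "'y set" where "CY = {e \<in> RY. \<exists>v \<in> ends Y e. card (comp_edges Y RY v) \<noteq> 1}"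
definition MY :: "'y set" where "MY = {e \<in> RY. \<exists>v \<in> ends Y e. card (comp_edges Y RY v) = 1}"

definition TH :: "('e + 'y) set" where "TH = Inl ` (T - ER) \<union> Inr ` TY"
definition CH :: "('e + 'y) set" where "CH = Inl ` (C - ER) \<union> Inr ` CY"
definition MH :: "('e + 'y) set" where "MH = Inl ` (M - ER) \<union> Inr ` MY"

lemma wf_X: "wf_graph X" and wf_Y: "wf_graph Y" and wf_G: "wf_graph G"
  using template_X template_Y cubic_G template_wf_graph unfolding cubic_def by auto

lemmas decomp_parts = three_decompD[OF decomp]

lemma T_subset: "T \<subseteq> edges G" and C_subset: "C \<subseteq> edges G" and M_subset: "M \<subseteq> edges G"
  using decomp_parts(1) by auto

lemma finite_T: "finite T"
  using T_subset wf_graph_finite(2)[OF wf_G] by (rule finite_subset)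

lemma inj_f: "inj_on f inX"
  using embedding unfolding embedding_def inX_def by simp

lemma R_subset: "R \<subseteq> verts G"
  using embedding unfolding embedding_def inX_def R_def by simp

lemma f_outer: "w \<in> Out \<Longrightarrow> f w \<in> verts G - R"
  using embedding unfolding embedding_def inX_def R_def by blast

lemma bij_\<chi>: "bij_betw \<chi> (edges X) {e \<in> edges G. ends G e \<inter> R \<noteq> {}}"
  using embedding unfolding embedding_def inX_def R_def by simp

lemma inj_\<chi>: "inj_on \<chi> (edges X)"
  using bij_\<chi> bij_betw_def by blast

lemma ER_eq: "ER = {e \<in> edges G. ends G e \<inter> R \<noteq> {}}"
  using bij_\<chi> unfolding bij_betw_def ER_def by simp

lemma ends_\<chi>: "e \<in> edges X \<Longrightarrow> ends G (\<chi> e) = f ` ends X e"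
  using embedding unfolding embedding_def by blast

lemma TX_eq: "TX = {e \<in> edges X. \<chi> e \<in> T}"
  unfolding TX_def restrict_to_def by simp

lemma f_in_R_iff: "z \<in> verts X \<Longrightarrow> f z \<in> R \<longleftrightarrow> z \<in> inX"
  using f_outer unfolding R_def inX_def by auto

lemma edge_at_inner_image:
  assumes u: "u \<in> inX" and g: "g \<in> edges G" "f u \<in> ends G g"
  obtains e where "e \<in> edges X" "g = \<chi> e" "u \<in> ends X e"
proof -
  have "g \<in> ER" unfolding ER_eq using g u unfolding R_def by blast
  then obtain e where e: "e \<in> edges X" "g = \<chi> e" unfolding ER_def by blast
  then obtain z where z: "z \<in> ends X e" "f z = f u" using g(2) ends_\<chi> by auto
  then have "z \<in> verts X" using wf_graph_ends(2)[OF wf_X e(1)] by blast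
  then have "z = u" using z(2) u f_in_R_iff inj_f unfolding R_def inj_on_def by auto
  then show ?thesis using that e z by blast
qed

lemma verts_H: "verts H = Inl ` (verts G - R) \<union> Inr ` inY"
  unfolding H_def transform_def R_def inY_def inX_def by simp

lemma edges_H: "edges H = Inl ` (edges G - ER) \<union> Inr ` edges Y"
  unfolding H_def transform_def ER_def by simp

lemma ends_H_Inl [simp]: "ends H (Inl g) = Inl ` ends G g"
  unfolding H_def transform_def by simp

lemma ends_H_Inr [simp]: "ends H (Inr e) = vmap ` ends Y e"
  unfolding H_def transform_def vmap_def by simp

lemma vmap_eq_Inl_iff: "vmap w = Inl x \<longleftrightarrow> w \<in> Out \<and> f w = x"
  unfolding vmap_def by auto

lemma inj_on_vmap_ends: "e \<in> edges Y \<Longrightarrow> inj_on vmap (ends Y e)"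
  using template_edge_outer_unique[OF template_Y] unfolding vmap_def inj_on_def
  by (auto split: if_splits)

lemma wf_H: "wf_graph H"
  unfolding wf_graph_def
proof (intro conjI ballI)
  show "finite (verts H)" "finite (edges H)"
    unfolding verts_H edges_H inY_def using wf_G wf_Y unfolding wf_graph_def by auto
  fix g assume g: "g \<in> edges H"
  show "ends H g \<subseteq> verts H"
  proof (cases g)
    case (Inl g0)
    then have "g0 \<in> edges G - ER" using g unfolding edges_H by auto
    then have "ends G g0 \<subseteq> verts G - R" using ER_eq wf_graph_ends(2)[OF wf_G] by blast
    then show ?thesis unfolding Inl verts_H by auto
  next
    case (Inr e)
    then have "ends Y e \<subseteq> verts Y" using g wf_graph_ends(2)[OF wf_Y] unfolding edges_H by auto
    then show ?thesis using f_outer unfolding Inr verts_H inY_def by (auto simp: vmap_def)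
  qed
  show "card (ends H g) = 2"
  proof (cases g)
    case (Inl g0)
    then show ?thesis using g wf_graph_ends(1)[OF wf_G] unfolding edges_H by (auto simp: card_image)
  next
    case (Inr e)
    then have "e \<in> edges Y" using g unfolding edges_H by auto
    then show ?thesis
      using wf_graph_ends(1)[OF wf_Y] inj_on_vmap_ends unfolding Inr by (simp add: card_image)
  qed
qed


lemma RY_subset: "RY \<subseteq> edges Y"
  unfolding RY_def by simp

lemma finite_RY: "finite RY"
  using wf_graph_finite(2)[OF wf_Y] unfolding RY_def by simp

lemma CY_iff:
  assumes "e \<in> RY" "v \<in> ends Y e"
  shows "e \<in> CY \<longleftrightarrow> card (comp_edges Y RY v) \<noteq> 1"
proof
  assume "e \<in> CY"
  then obtain v' where "v' \<in> ends Y e" "card (comp_edges Y RY v') \<noteq> 1" unfolding CY_def by blast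
  then show "card (comp_edges Y RY v) \<noteq> 1"
    using comp_edges_eq_ends[OF wf_Y RY_subset assms(1) _ assms(2)] by metis
qed (use assms in \<open>auto simp: CY_def\<close>)

lemma MY_iff:
  assumes "e \<in> RY" "v \<in> ends Y e"
  shows "e \<in> MY \<longleftrightarrow> card (comp_edges Y RY v) = 1"
proof
  assume "e \<in> MY"
  then obtain v' where "v' \<in> ends Y e" "card (comp_edges Y RY v') = 1" unfolding MY_def by blast
  then show "card (comp_edges Y RY v) = 1"
    using comp_edges_eq_ends[OF wf_Y RY_subset assms(1) _ assms(2)] by metis
qed (use assms in \<open>auto simp: MY_def\<close>)

lemma CY_subset: "CY \<subseteq> RY" and MY_subset: "MY \<subseteq> RY"
  unfolding CY_def MY_def by auto

lemma CY_Un_MY: "CY \<union> MY = RY" and CY_Int_MY: "CY \<inter> MY = {}"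
proof -
  have "\<exists>v. v \<in> ends Y e" if "e \<in> RY" for e
    using that RY_subset wf_graph_edgeE[OF wf_Y] by (metis insertI1 subsetD)
  then show "CY \<union> MY = RY" "CY \<inter> MY = {}"
    using CY_iff MY_iff CY_subset MY_subset by blast+
qed

lemma consistent_Y_at:
  assumes "v \<in> verts Y"
  shows "comp_edges Y RY v = {} \<or> card (comp_edges Y RY v) = 1 \<or> cycle_edges Y (comp_edges Y RY v)
     \<or> outer_path Y Out (comp_verts Y RY v) (comp_edges Y RY v)"
  using consistent_Y assms unfolding three_consistent_def RY_def Let_def by blast

lemma label_Y:
  assumes w: "w \<in> Out"
  shows "out_edge Y w \<in> CY \<longleftrightarrow> label_of Y TY w = LabC"
    and "out_edge Y w \<in> MY \<longleftrightarrow> label_of Y TY w = LabM"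
proof -
  define e where "e = out_edge Y w"
  have e: "e \<in> edges Y" "w \<in> ends Y e"
    unfolding e_def using out_edge_in_edges[OF template_Y w] out_edge_incident[OF template_Y w] by simp_all
  have "(e \<in> CY \<longleftrightarrow> label_of Y TY w = LabC) \<and> (e \<in> MY \<longleftrightarrow> label_of Y TY w = LabM)"
  proof (cases "e \<in> TY")
    case True
    then have "e \<notin> RY" unfolding RY_def by simp
    moreover have "label_of Y TY w = LabT"
      unfolding label_of_def e_def[symmetric] Let_def using True by simp
    ultimately show ?thesis using CY_subset MY_subset by auto
  next
    case False
    then have eR: "e \<in> RY" unfolding RY_def using e by simp
    have "e \<in> comp_edges Y RY w" by (rule edge_in_comp_edges[OF wf_Y RY_subset eR e(2)])
    then have "comp_edges Y RY w = {e} \<longleftrightarrow> card (comp_edges Y RY w) = 1"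
      by (metis card_1_singletonE singletonD is_singletonI is_singleton_altdef)
    moreover have "label_of Y TY w = (if comp_edges Y RY w = {e} then LabM else LabC)"
      unfolding label_of_def e_def[symmetric] Let_def RY_def using False by simp
    ultimately show ?thesis using CY_iff[OF eR e(2)] MY_iff[OF eR e(2)] by auto
  qed
  then show "out_edge Y w \<in> CY \<longleftrightarrow> label_of Y TY w = LabC"
    and "out_edge Y w \<in> MY \<longleftrightarrow> label_of Y TY w = LabM" unfolding e_def by auto
qed

lemma edges_at_subset_comp_edges:
  "{e \<in> RY. v \<in> ends Y e} \<subseteq> comp_edges Y RY v"
  using edge_in_comp_edges[OF wf_Y RY_subset] by blast

lemma degF_CY_inner:
  assumes v: "v \<in> inY"
  shows "degF Y CY v = 0 \<or> degF Y CY v = 2"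
proof (cases "\<exists>e \<in> CY. v \<in> ends Y e")
  case False
  then have "{e \<in> CY. v \<in> ends Y e} = {}" by blast
  then show ?thesis unfolding degF_def by (metis card.empty le0)
next
  case True
  then obtain e where e: "e \<in> CY" "v \<in> ends Y e" by blast
  define S where "S = comp_edges Y RY v"
  have eR: "e \<in> RY" using e CY_subset by blast
  have card_S: "card S \<noteq> 1" using CY_iff[OF eR e(2)] e(1) unfolding S_def by simp
  have eS: "e \<in> S" unfolding S_def by (rule edge_in_comp_edges[OF wf_Y RY_subset eR e(2)])
  have CY_at: "{e \<in> CY. v \<in> ends Y e} = {e \<in> S. v \<in> ends Y e}"
  proof (intro set_eqI iffI)
    fix g assume "g \<in> {e \<in> CY. v \<in> ends Y e}"
    then show "g \<in> {e \<in> S. v \<in> ends Y e}"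
      using edges_at_subset_comp_edges[of v] CY_subset unfolding S_def by blast
  next
    fix g assume "g \<in> {e \<in> S. v \<in> ends Y e}"
    then have "g \<in> RY" "v \<in> ends Y g" using comp_edges_subset[of Y RY v] unfolding S_def by auto
    then show "g \<in> {e \<in> CY. v \<in> ends Y e}" using CY_iff[of g v] card_S unfolding S_def by simp
  qed
  have vY: "v \<in> verts Y" "v \<notin> Out" using v unfolding inY_def by auto
  have "finite S" unfolding S_def using finite_RY comp_edges_subset finite_subset by metis
  then have "degF Y S v \<noteq> 0" using eS e(2) unfolding degF_def by auto
  have "cycle_edges Y S \<or> outer_path Y Out (comp_verts Y RY v) S"
    using consistent_Y_at[OF vY(1)] eS card_S unfolding S_def[symmetric] by blast
  then have "degF Y S v = 2"
  proof
    assume "cycle_edges Y S"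
    moreover have "v \<in> touched Y S" using eS e(2) unfolding touched_def by blast
    ultimately show ?thesis unfolding cycle_edges_def by blast
  next
    assume "outer_path Y Out (comp_verts Y RY v) S"
    then have "degF Y S v \<le> 2" "degF Y S v \<noteq> 1"
      using comp_verts_self[OF vY(1)] vY(2) unfolding outer_path_def by blast+
    then show ?thesis using \<open>degF Y S v \<noteq> 0\<close> by linarith
  qed
  then show ?thesis unfolding degF_def CY_at by simp
qed

lemma degF_MY_inner: "degF Y MY v \<le> 1"
proof (cases "\<exists>e \<in> MY. v \<in> ends Y e")
  case False
  then have "{e \<in> MY. v \<in> ends Y e} = {}" by blast
  then show ?thesis unfolding degF_def by (metis card.empty le0)
next
  case True
  then obtain e where e: "e \<in> MY" "v \<in> ends Y e" by blast
  then have "e \<in> RY" using MY_subset by blast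
  then have "card (comp_edges Y RY v) = 1" using MY_iff[of e v] e by blast
  moreover have "{e \<in> MY. v \<in> ends Y e} \<subseteq> comp_edges Y RY v"
    using edges_at_subset_comp_edges[of v] MY_subset by blast
  moreover have "finite (comp_edges Y RY v)"
    using finite_RY comp_edges_subset finite_subset by metis
  ultimately show ?thesis unfolding degF_def using card_mono by metis
qed


lemma out_edge_X_endsE:
  assumes "w \<in> Out"
  obtains u where "ends X (out_edge X w) = {w, u}" "u \<in> inX"
  using out_edge_endsE[OF template_X assms] unfolding inX_def by metis

lemma RX_subset: "RX \<subseteq> edges X"
  unfolding RX_def by simp

lemma comp_edges_RX_if_C:
  assumes w: "w \<in> Out" and C: "\<chi> (out_edge X w) \<in> C"
  shows "comp_edges X RX w \<noteq> {out_edge X w}"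
proof -
  define e where "e = out_edge X w"
  obtain u where u: "ends X e = {w, u}" "u \<in> inX" using out_edge_X_endsE[OF w] unfolding e_def by metis
  have eX: "e \<in> edges X" unfolding e_def by (rule out_edge_in_edges[OF template_X w])
  have "f u \<in> ends G (\<chi> e)" using ends_\<chi>[OF eX] u(1) by simp
  then obtain g where g: "g \<in> C" "g \<noteq> \<chi> e" "f u \<in> ends G g"
    using two_regular_partner_edge[OF wf_G decomp_parts(6) C[folded e_def]] by blast
  obtain e' where e': "e' \<in> edges X" "g = \<chi> e'" "u \<in> ends X e'"
    using edge_at_inner_image[OF u(2)] g(1,3) C_subset by blast
  have "e' \<in> RX" using e' g(1) decomp_parts(2) unfolding RX_def TX_eq by blast
  then have "e' \<in> comp_edges X RX u" by (rule edge_in_comp_edges[OF wf_X RX_subset _ e'(3)])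
  moreover have "e \<in> RX" using eX C decomp_parts(2) unfolding e_def RX_def TX_eq by blast
  then have "comp_edges X RX u = comp_edges X RX w"
    using comp_edges_eq_ends[OF wf_X RX_subset, of e u w] u(1) by simp
  ultimately show ?thesis using e'(2) g(2) unfolding e_def by auto
qed

lemma comp_edges_RX_if_M:
  assumes w: "w \<in> Out" and M: "\<chi> (out_edge X w) \<in> M"
  shows "comp_edges X RX w = {out_edge X w}"
proof -
  define e where "e = out_edge X w"
  obtain u where u: "ends X e = {w, u}" "u \<in> inX" using out_edge_X_endsE[OF w] unfolding e_def by metis
  have eX: "e \<in> edges X" unfolding e_def by (rule out_edge_in_edges[OF template_X w])
  have "e \<in> RX" using eX M decomp_parts(3) unfolding e_def RX_def TX_eq by blast
  then have e_comp: "e \<in> comp_edges X RX w" using edge_in_comp_edges[OF wf_X RX_subset] u(1) by simp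
  show ?thesis
  proof (rule ccontr)
    assume "comp_edges X RX w \<noteq> {out_edge X w}"
    then obtain e' where "e' \<in> comp_edges X RX w" "e' \<noteq> e" using e_comp unfolding e_def by blast
    then obtain g where g: "g \<in> RX - {e}" "u \<in> ends X g"
      using comp_edges_at_outer[OF template_X w u(1)[unfolded e_def] RX_subset] unfolding e_def by blast
    have gX: "g \<in> edges X" using g(1) RX_subset by blast
    have "\<chi> g = \<chi> (out_edge X w)"
    proof (rule three_decomp_matching_edge_unique[OF cubic_G decomp M])
      show "f u \<in> ends G (\<chi> (out_edge X w))" using ends_\<chi>[OF eX] u(1) unfolding e_def by simp
      show "\<chi> g \<in> edges G - T" using g(1) gX ER_eq unfolding RX_def TX_eq ER_def by blast
      show "f u \<in> ends G (\<chi> g)" using ends_\<chi>[OF gX] g(2) by simp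
    qed
    then show False using inj_\<chi> gX eX g(1) unfolding inj_on_def e_def by blast
  qed
qed

lemma label_X:
  assumes w: "w \<in> Out"
  shows "\<chi> (out_edge X w) \<in> C \<longleftrightarrow> label_of X TX w = LabC"
    and "\<chi> (out_edge X w) \<in> M \<longleftrightarrow> label_of X TX w = LabM"
proof -
  define e where "e = out_edge X w"
  have eX: "e \<in> edges X" unfolding e_def by (rule out_edge_in_edges[OF template_X w])
  have "(\<chi> e \<in> C \<longleftrightarrow> label_of X TX w = LabC) \<and> (\<chi> e \<in> M \<longleftrightarrow> label_of X TX w = LabM)"
  proof (cases "e \<in> TX")
    case True
    then have "\<chi> e \<notin> C" "\<chi> e \<notin> M" using decomp_parts(2,3) unfolding TX_eq by blast+
    moreover have "label_of X TX w = LabT"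
      unfolding label_of_def e_def[symmetric] Let_def using True by simp
    ultimately show ?thesis by simp
  next
    case False
    then have "label_of X TX w = (if comp_edges X RX w = {e} then LabM else LabC)"
      unfolding label_of_def e_def[symmetric] Let_def RX_def by simp
    moreover have "\<chi> e \<in> C \<or> \<chi> e \<in> M" "\<not> (\<chi> e \<in> C \<and> \<chi> e \<in> M)"
      using False eX decomp_parts(1,4) ER_eq unfolding TX_eq ER_def by blast+
    ultimately show ?thesis
      using comp_edges_RX_if_C[OF w] comp_edges_RX_if_M[OF w] unfolding e_def by auto
  qed
  then show "\<chi> (out_edge X w) \<in> C \<longleftrightarrow> label_of X TX w = LabC"
    and "\<chi> (out_edge X w) \<in> M \<longleftrightarrow> label_of X TX w = LabM" unfolding e_def by auto
qed

lemma out_edge_CY_iff: "w \<in> Out \<Longrightarrow> out_edge Y w \<in> CY \<longleftrightarrow> \<chi> (out_edge X w) \<in> C"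
  and out_edge_MY_iff: "w \<in> Out \<Longrightarrow> out_edge Y w \<in> MY \<longleftrightarrow> \<chi> (out_edge X w) \<in> M"
  using label_Y label_X same_labels unfolding TX_def by simp_all


lemma Y_edges_at_outer_image:
  assumes x: "x \<notin> R"
  shows "{e \<in> edges Y. Inl x \<in> vmap ` ends Y e} = out_edge Y ` {w \<in> Out. f w = x}"
proof (intro set_eqI iffI)
  fix e assume "e \<in> {e \<in> edges Y. Inl x \<in> vmap ` ends Y e}"
  then obtain w where "e \<in> edges Y" "w \<in> ends Y e" "w \<in> Out" "f w = x"
    by (auto simp: vmap_def split: if_splits)
  then show "e \<in> out_edge Y ` {w \<in> Out. f w = x}" using out_edge_iff[OF template_Y] by blast
next
  fix e assume "e \<in> out_edge Y ` {w \<in> Out. f w = x}"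
  then obtain w where "e = out_edge Y w" "w \<in> Out" "f w = x" by blast
  then show "e \<in> {e \<in> edges Y. Inl x \<in> vmap ` ends Y e}"
    using out_edge_in_edges[OF template_Y] out_edge_incident[OF template_Y] vmap_eq_Inl_iff
    by (metis (mono_tags, lifting) image_eqI mem_Collect_eq)
qed

lemma ER_edges_at_outer_image:
  assumes x: "x \<notin> R"
  shows "{g \<in> ER. x \<in> ends G g} = (\<lambda>w. \<chi> (out_edge X w)) ` {w \<in> Out. f w = x}"
proof (intro set_eqI iffI)
  fix g assume "g \<in> {g \<in> ER. x \<in> ends G g}"
  then obtain e z where e: "e \<in> edges X" "g = \<chi> e" "z \<in> ends X e" "f z = x"
    unfolding ER_def using ends_\<chi> by fastforce
  moreover have z: "z \<in> Out"
    using e x wf_graph_ends(2)[OF wf_X] unfolding R_def inX_def by blast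
  ultimately have "e = out_edge X z" using out_edge_iff[OF template_X z, of e] by blast
  then show "g \<in> (\<lambda>w. \<chi> (out_edge X w)) ` {w \<in> Out. f w = x}"
    using e z by blast
next
  fix g assume "g \<in> (\<lambda>w. \<chi> (out_edge X w)) ` {w \<in> Out. f w = x}"
  then obtain w where "g = \<chi> (out_edge X w)" "w \<in> Out" "f w = x" by blast
  then show "g \<in> {g \<in> ER. x \<in> ends G g}"
    using out_edge_in_edges[OF template_X] out_edge_incident[OF template_X] ends_\<chi>
    unfolding ER_def by auto
qed

lemma inj_on_\<chi>_out_edge: "inj_on (\<lambda>w. \<chi> (out_edge X w)) Out"
  using inj_\<chi> out_edge_inj_on[OF template_X] out_edge_in_edges[OF template_X]
  unfolding inj_on_def by blast

lemma degF_H_outer: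
  assumes x: "x \<in> verts G - R" and Z: "Z \<subseteq> edges Y" and D: "D \<subseteq> edges G"
    and same_class: "\<forall>w \<in> Out. out_edge Y w \<in> Z \<longleftrightarrow> \<chi> (out_edge X w) \<in> D"
  shows "degF H (Inl ` (D - ER) \<union> Inr ` Z) (Inl x) = degF G D x"
proof -
  define W where "W = {w \<in> Out. f w = x \<and> out_edge Y w \<in> Z}"
  define A where "A = {g \<in> D - ER. x \<in> ends G g}"
  have xR: "x \<notin> R" using x by blast
  have fin: "finite D" "finite Z"
    using D Z wf_graph_finite(2)[OF wf_G] wf_graph_finite(2)[OF wf_Y] finite_subset by auto
  have "{g \<in> Inl ` (D - ER) \<union> Inr ` Z. Inl x \<in> ends H g} =
      Inl ` A \<union> Inr ` {e \<in> Z. Inl x \<in> vmap ` ends Y e}"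
    unfolding A_def by auto
  also have "{e \<in> Z. Inl x \<in> vmap ` ends Y e} = out_edge Y ` W"
  proof -
    have "{e \<in> Z. Inl x \<in> vmap ` ends Y e} = {e \<in> edges Y. Inl x \<in> vmap ` ends Y e} \<inter> Z"
      using Z by blast
    then show ?thesis unfolding Y_edges_at_outer_image[OF xR] W_def by auto
  qed
  finally have "degF H (Inl ` (D - ER) \<union> Inr ` Z) (Inl x) = card (Inl ` A \<union> Inr ` out_edge Y ` W)"
    unfolding degF_def by simp
  also have "\<dots> = card A + card (out_edge Y ` W)"
  proof (subst card_Un_disjoint)
    show "finite (Inl ` A)" using fin(1) unfolding A_def by simp
    show "finite (Inr ` out_edge Y ` W)"
      using finite_subset[OF _ wf_graph_finite(1)[OF wf_Y]] template_outer_subset[OF template_Y]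
      unfolding W_def by auto
  qed (auto simp: card_image)
  also have "card (out_edge Y ` W) = card W"
    using out_edge_inj_on[OF template_Y] unfolding W_def by (auto intro: card_image inj_on_subset)
  also have "card W = card ((\<lambda>w. \<chi> (out_edge X w)) ` W)"
    using inj_on_subset[OF inj_on_\<chi>_out_edge] unfolding W_def by (intro card_image[symmetric]) auto
  also have "(\<lambda>w. \<chi> (out_edge X w)) ` W = {g \<in> D \<inter> ER. x \<in> ends G g}"
  proof -
    have "{g \<in> D \<inter> ER. x \<in> ends G g} = {g \<in> ER. x \<in> ends G g} \<inter> D" by blast
    then show ?thesis unfolding ER_edges_at_outer_image[OF xR] W_def using same_class by auto
  qed
  also have "card A + card {g \<in> D \<inter> ER. x \<in> ends G g} = degF G D x"
  proof -
    have "{g \<in> D. x \<in> ends G g} = A \<union> {g \<in> D \<inter> ER. x \<in> ends G g}" unfolding A_def by auto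
    then show ?thesis unfolding degF_def A_def using fin by (subst card_Un_disjoint[symmetric]) auto
  qed
  finally show ?thesis .
qed

lemma degF_H_inner:
  assumes y: "y \<in> inY"
  shows "degF H (Inl ` D \<union> Inr ` Z) (Inr y) = degF Y Z y"
proof -
  have "Inr y \<in> vmap ` ends Y e \<longleftrightarrow> y \<in> ends Y e" for e
    using y unfolding inY_def by (force simp: vmap_def)
  then have "{g \<in> Inl ` D \<union> Inr ` Z. Inr y \<in> ends H g} = Inr ` {e \<in> Z. y \<in> ends Y e}"
    by auto
  then show ?thesis unfolding degF_def by (simp add: card_image)
qed

lemma verts_H_cases:
  assumes "z \<in> verts H"
  obtains x where "z = Inl x" "x \<in> verts G - R" | y where "z = Inr y" "y \<in> inY"
  using assms unfolding verts_H by blast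

lemma two_regular_CH: "two_regular H CH"
  unfolding two_regular_def
proof (intro conjI ballI)
  show "CH \<subseteq> edges H" unfolding CH_def edges_H using C_subset CY_subset RY_subset by auto
  fix z assume "z \<in> verts H"
  then show "degF H CH z = 0 \<or> degF H CH z = 2"
  proof (cases rule: verts_H_cases)
    case (1 x)
    have "degF H CH z = degF G C x" unfolding 1 CH_def
      using degF_H_outer[OF 1(2) _ C_subset] CY_subset RY_subset out_edge_CY_iff by blast
    then show ?thesis using decomp_parts(6) 1(2) unfolding two_regular_def by simp
  next
    case (2 y)
    then show ?thesis unfolding CH_def using degF_H_inner degF_CY_inner by simp
  qed
qed

lemma matching_MH: "matching H MH"
  unfolding matching_def
proof (intro conjI ballI)
  show "MH \<subseteq> edges H" unfolding MH_def edges_H using M_subset MY_subset RY_subset by auto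
  fix z assume "z \<in> verts H"
  then show "degF H MH z \<le> 1"
  proof (cases rule: verts_H_cases)
    case (1 x)
    have "degF H MH z = degF G M x" unfolding 1 MH_def
      using degF_H_outer[OF 1(2) _ M_subset] MY_subset RY_subset out_edge_MY_iff by blast
    then show ?thesis using decomp_parts(7) 1(2) unfolding matching_def by simp
  next
    case (2 y)
    then show ?thesis unfolding MH_def using degF_H_inner degF_MY_inner by simp
  qed
qed

lemma partition_H:
  "TH \<union> CH \<union> MH = edges H" "TH \<inter> CH = {}" "TH \<inter> MH = {}" "CH \<inter> MH = {}"
proof -
  have "TY \<union> CY \<union> MY = edges Y"
    using CY_Un_MY consistent_Y unfolding RY_def three_consistent_def by blast
  then show "TH \<union> CH \<union> MH = edges H"
    unfolding TH_def CH_def MH_def edges_H using decomp_parts(1) by blast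
  show "TH \<inter> CH = {}" "TH \<inter> MH = {}" "CH \<inter> MH = {}"
    unfolding TH_def CH_def MH_def using decomp_parts(2-4) CY_subset MY_subset CY_Int_MY
    unfolding RY_def by blast+
qed


lemma TH_subset: "TH \<subseteq> edges H"
  unfolding TH_def edges_H using T_subset consistent_Y unfolding three_consistent_def by auto

lemma conn_H_of_conn_Y: "conn Y TY a b \<Longrightarrow> conn H TH (vmap a) (vmap b)"
  unfolding conn_def[of Y]
proof (induction rule: rtranclp_induct)
  case (step y z)
  then obtain g where g: "g \<in> TY" "ends Y g = {y, z}" by blast
  then have "conn H TH (vmap y) (vmap z)"
    using conn_edge[of "Inr g" TH H] unfolding TH_def by simp
  then show ?case by (rule conn_trans[OF step.IH])
qed simp

lemma exists_outer_conn_X: "v \<in> verts X \<Longrightarrow> \<exists>u \<in> Out. conn X TX v u"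
  using consistent_X unfolding three_consistent_def TX_def by blast

lemma exists_outer_conn_Y: "v \<in> verts Y \<Longrightarrow> \<exists>u \<in> Out. conn Y TY v u"
  using consistent_Y unfolding three_consistent_def by blast

text \<open>Sends each vertex of R' to the image of an outer vertex in its TX-component.\<close>
definition proj :: "'v \<Rightarrow> 'v + 'w" where
  "proj z = (if z \<in> R then Inl (f (SOME w. w \<in> Out \<and> conn X TX (inv_into inX f z) w)) else Inl z)"

lemma proj_outside: "z \<notin> R \<Longrightarrow> proj z = Inl z"
  unfolding proj_def by simp

lemma proj_image: 
  assumes v: "v \<in> verts X"
  shows "\<exists>w \<in> Out. conn X TX v w \<and> proj (f v) = Inl (f w)"
proof (cases "v \<in> Out")
  case True
  then show ?thesis using f_outer proj_outside by (intro bexI[of _ v]) auto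
next
  case False
  then have v_in: "v \<in> inX" unfolding inX_def using v by simp
  have "\<exists>w. w \<in> Out \<and> conn X TX v w" using exists_outer_conn_X[OF v] by blast
  then have "(SOME w. w \<in> Out \<and> conn X TX v w) \<in> Out \<and> conn X TX v (SOME w. w \<in> Out \<and> conn X TX v w)"
    by (rule someI_ex)
  moreover have "f v \<in> R" using v_in unfolding R_def by simp
  ultimately show ?thesis unfolding proj_def inv_into_f_f[OF inj_f v_in] by auto
qed

lemma conn_H_of_conn_G: "conn G T a b \<Longrightarrow> conn H TH (proj a) (proj b)"
  unfolding conn_def[of G]
proof (induction rule: rtranclp_induct)
  case (step y z)
  then obtain g where g: "g \<in> T" "ends G g = {y, z}" by blast
  have "conn H TH (proj y) (proj z)"
  proof (cases "g \<in> ER")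
    case False
    then have "y \<notin> R" "z \<notin> R" using g T_subset ER_eq by auto
    moreover have "Inl g \<in> TH" unfolding TH_def using g False by simp
    ultimately show ?thesis using conn_edge[of "Inl g" TH H "Inl y" "Inl z"] g proj_outside by simp
  next
    case True
    then obtain e where e: "e \<in> edges X" "g = \<chi> e" unfolding ER_def by blast
    obtain p q where pq: "ends X e = {p, q}" "p \<in> verts X" "q \<in> verts X"
      by (rule wf_graph_edgeE[OF wf_X e(1)])
    have "f ` {p, q} = {y, z}" using ends_\<chi>[OF e(1)] e(2) g(2) pq(1) by simp
    then have yz: "(y = f p \<and> z = f q) \<or> (y = f q \<and> z = f p)" by (auto simp: doubleton_eq_iff)
    obtain wp where wp: "wp \<in> Out" "conn X TX p wp" "proj (f p) = Inl (f wp)"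
      using proj_image[OF pq(2)] by blast
    obtain wq where wq: "wq \<in> Out" "conn X TX q wq" "proj (f q) = Inl (f wq)"
      using proj_image[OF pq(3)] by blast
    have "e \<in> TX" unfolding TX_eq using e g by simp
    then have "conn X TX p q" by (rule conn_edge[OF _ pq(1)])
    then have "conn X TX wp wq" using wp(2) wq(2) conn_sym conn_trans by metis
    then have "conn Y TY wp wq" using same_conn wp(1) wq(1) unfolding TX_def by blast
    then have "conn H TH (Inl (f wp)) (Inl (f wq))"
      using conn_H_of_conn_Y wp(1) wq(1) unfolding vmap_def by fastforce
    then show ?thesis using yz wp(3) wq(3) conn_sym by auto
  qed
  then show ?case by (rule conn_trans[OF step.IH])
qed simp

lemma conn_H_outside:
  assumes z: "z \<in> verts H"
  shows "\<exists>x \<in> verts G - R. conn H TH z (Inl x)"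
  using z
proof (cases rule: verts_H_cases)
  case (2 y)
  then have "y \<in> verts Y" "y \<notin> Out" unfolding inY_def by auto
  then obtain w where w: "w \<in> Out" "conn Y TY y w" using exists_outer_conn_Y by blast
  then have "conn H TH (vmap y) (vmap w)" by (intro conn_H_of_conn_Y)
  then show ?thesis using 2 w(1) \<open>y \<notin> Out\<close> f_outer unfolding vmap_def by auto
next
  case (1 x)
  then show ?thesis by (intro bexI[of _ x]) simp_all
qed

lemma conn_H: "z1 \<in> verts H \<Longrightarrow> z2 \<in> verts H \<Longrightarrow> conn H TH z1 z2"
proof -
  assume "z1 \<in> verts H" "z2 \<in> verts H"
  then obtain x1 x2 where x: "x1 \<in> verts G - R" "conn H TH z1 (Inl x1)"
    "x2 \<in> verts G - R" "conn H TH z2 (Inl x2)"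
    using conn_H_outside by meson
  then have "conn G T x1 x2" using decomp_parts(5) unfolding spanning_tree_def by blast
  then have "conn H TH (Inl x1) (Inl x2)"
    using conn_H_of_conn_G proj_outside x by fastforce
  then show "conn H TH z1 z2" using x conn_sym conn_trans by metis
qed

lemma ncomp_TX_eq_ncomp_TY: "ncomp X TX = ncomp Y TY"
proof -
  have "ncomp X TX = card (comp_verts X TX ` Out)"
    using template_outer_subset[OF template_X] exists_outer_conn_X
    by (intro ncomp_eq_card_comp_verts_image) auto
  also have "\<dots> = card (comp_verts Y TY ` Out)"
  proof (rule card_image_eq_if_same_kernel, intro ballI)
    fix w w' assume "w \<in> Out" "w' \<in> Out"
    then show "comp_verts X TX w = comp_verts X TX w' \<longleftrightarrow> comp_verts Y TY w = comp_verts Y TY w'"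
      using comp_verts_eq_iff template_outer_subset[OF template_X] template_outer_subset[OF template_Y]
        same_conn unfolding TX_def by (metis subsetD)
  qed
  also have "\<dots> = ncomp Y TY"
    using template_outer_subset[OF template_Y] exists_outer_conn_Y
    by (intro ncomp_eq_card_comp_verts_image[symmetric]) auto
  finally show ?thesis .
qed


lemma verts_G_empty_iff: "verts G = {} \<longleftrightarrow> verts H = {}"
proof
  assume "verts G = {}"
  then have "Out = {}" using f_outer by blast
  then have "verts Y = {}" using exists_outer_conn_Y by blast
  then show "verts H = {}" using \<open>verts G = {}\<close> unfolding verts_H inY_def by simp
next
  assume H: "verts H = {}"
  then have "Out = {}" using f_outer unfolding verts_H by blast
  then have "verts X = {}" using exists_outer_conn_X by blast
  then show "verts G = {}" using H unfolding verts_H R_def inX_def by simp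
qed

lemma ncomp_TH: "ncomp H TH = ncomp G T"
  using ncomp_if_connected[of H TH] ncomp_if_connected[of G T] conn_H verts_G_empty_iff decomp_parts(5)
  unfolding spanning_tree_def by simp

lemma card_T: "card T = card (T - ER) + card TX"
proof -
  have "T \<inter> ER = \<chi> ` TX" unfolding TX_eq ER_def by blast
  moreover have "card (\<chi> ` TX) = card TX"
    using inj_on_subset[OF inj_\<chi>] unfolding TX_eq by (intro card_image) auto
  ultimately show ?thesis using card_Int_Diff[OF finite_T, of ER] by simp
qed

text \<open>Both forests TX and TY have one component per class of outer vertices, so
  |V(X)| - |TX| = |V(Y)| - |TY|; hence the swap preserves |V| - |T|.\<close>
lemma ncomp_add_card_TH: "ncomp H TH + card TH = card (verts H)"
proof -
  have finite: "finite (verts G)" "finite (verts X)" "finite (verts Y)" "finite TY"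
    using wf_graph_finite[OF wf_G] wf_graph_finite[OF wf_X] wf_graph_finite[OF wf_Y]
      consistent_Y finite_subset unfolding three_consistent_def by auto
  have "ncomp G T + card T = card (verts G)"
    using ncomp_add_card_if_acyclic[OF wf_G T_subset] decomp_parts(5) unfolding spanning_tree_def by simp
  moreover have "ncomp X TX + card TX = card (verts X)"
    using ncomp_add_card_if_acyclic[OF wf_X] consistent_X unfolding three_consistent_def TX_def by simp
  moreover have "ncomp Y TY + card TY = card (verts Y)"
    using ncomp_add_card_if_acyclic[OF wf_Y] consistent_Y unfolding three_consistent_def by simp
  moreover have "card (verts X) = card Out + card inX"
    using card_Int_Diff[OF finite(2), of Out] template_outer_subset[OF template_X]
    unfolding inX_def by (simp add: Int_absorb1)
  moreover have "card (verts Y) = card Out + card inY"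
    using card_Int_Diff[OF finite(3), of Out] template_outer_subset[OF template_Y]
    unfolding inY_def by (simp add: Int_absorb1)
  moreover have "card (verts G) = card R + card (verts G - R)"
    using card_Int_Diff[OF finite(1), of R] R_subset by (simp add: Int_absorb1)
  moreover have "card R = card inX" unfolding R_def by (rule card_image[OF inj_f])
  moreover have "card (verts H) = card (verts G - R) + card inY"
    using finite unfolding verts_H inY_def by (subst card_Un_disjoint) (auto simp: card_image)
  moreover have "card TH = card (T - ER) + card TY"
    using finite_T finite unfolding TH_def by (subst card_Un_disjoint) (auto simp: card_image)
  ultimately show ?thesis using card_T ncomp_TX_eq_ncomp_TY ncomp_TH by linarith
qed

lemma spanning_tree_TH: "spanning_tree H TH"
  using acyclic_if_ncomp_add_card[OF wf_H TH_subset ncomp_add_card_TH] TH_subset conn_H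
  unfolding spanning_tree_def by simp

lemma three_decomp_H: "three_decomp H TH CH MH"
  unfolding three_decomp_def using partition_H spanning_tree_TH two_regular_CH matching_MH by simp

end

theorem lemma25:
  fixes X :: "('w, 'x) mgraph" and Y :: "('w, 'y) mgraph" and Out :: "'w set"
    and G :: "('v, 'e) mgraph" and f :: "'w \<Rightarrow> 'v" and \<chi> :: "'x \<Rightarrow> 'e"
    and T C M :: "'e set"
  assumes "template X Out" and "template Y Out"
    and "cubic G"
    and "embedding G X Out f \<chi>"
    and "three_decomp G T C M"
    and "naively_extendable X Y Out (restrict_to X \<chi> T)"
  shows "\<exists>T' C' M'. three_decomp (transform G X Y Out f \<chi>) T' C' M'"
proof -
  obtain TY where "naive_extension X Y Out G f \<chi> T C M TY"
    using assms unfolding naively_extendable_def naive_extension_def by blast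
  then interpret naive_extension X Y Out G f \<chi> T C M TY .
  show ?thesis using three_decomp_H unfolding H_def by blast
qed

end
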